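(* Let $(\Sigma_A,T)$ be a topologically mixing one-sided subshift of finite type, $\Psi=\{\psi_n\}_{n\ge1}\in\mathcal F^-(\Sigma_A,T)$, $Q(s)=P(s\Psi)$, equip $\Sigma_A$ with the metric $d_\Psi$, and let $\mu_{\max}$ be the Gibbs measure of the zero potential (the measure of maximal entropy). Then for every $x\in\Sigma_A$, $\underline d_{\mu_{\max}}(x)=-\dfrac{Q(0)}{\liminf_{n\to\infty}\frac1n\psi_n(x)}$ and $\overline d_{\mu_{\max}}(x)=-\dfrac{Q(0)}{\limsup_{n\to\infty}\frac1n\psi_n(x)}$.
   Context: A sequence $\Phi=\{\phi_n\}_{n\ge1}$ of continuous functions on $\Sigma_A$ is almost additive if $|\phi_{n+m}(x)-\phi_n(x)-\phi_m(T^nx)|\le C$; bounded variation if $\sup\{|\phi_n(x)-\phi_n(y)|:x|_n=y|_n\}\le C'$ for all $n$; negative if there is $c>0$ with $\phi_n(x)\le-cn$ and $n\mapsto\phi_n(x)$ decreasing. $\mathcal F^-(\Sigma_A,T)$: negative almost additive potentials with bounded variation. Pressure: $P(\Phi)=\lim_n\frac1n\log\sum_{|w|=n}\exp(\sup_{x\in[w]}\phi_n(x))$. Weak Gibbs metric: $d_\Psi(x,y)=\sup_{z\in[x\wedge y]}\exp(\psi_{|x\wedge y|}(z))$, where $x\wedge y$ is the longest common prefix and $\psi_0:=0$. The measure $\mu_{\max}$ satisfies $\mu_{\max}([x|_n])\asymp\exp(-nQ(0))$ uniformly, with $Q(0)=h_{top}(T)$. Local dimensions: $\underline d_\mu(x)=\liminf_{r\to0}\frac{\log\mu(B(x,r))}{\log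 r}$, $\overline d_\mu(x)=\limsup_{r\to0}\frac{\log\mu(B(x,r))}{\log r}$, balls with respect to $d_\Psi$. *)

theory Defs
  imports "HOL-Analysis.Analysis"
begin

text \<open>One-sided subshift of finite type over the alphabet {0..<k} with 0-1 transition
  matrix A (given as a relation).  Points are sequences nat => nat, with the product
  topology of the discrete space nat (library instance).\<close>

definition SFT :: "nat \<Rightarrow> (nat \<Rightarrow> nat \<Rightarrow> bool) \<Rightarrow> (nat \<Rightarrow> nat) set" where
  "SFT k A = {x. \<forall>i. x i < k \<and> A (x i) (x (Suc i))}"

definition shift :: "(nat \<Rightarrow> nat) \<Rightarrow> (nat \<Rightarrow> nat)" where
  "shift x = (\<lambda>i. x (Suc i))"

definition top_mixing :: "nat \<Rightarrow> (nat \<Rightarrow> nat \<Rightarrow> bool) \<Rightarrow> bool" where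
  "top_mixing k A \<longleftrightarrow>
     (\<forall>U V. open U \<and> open V \<and> U \<inter> SFT k A \<noteq> {} \<and> V \<inter> SFT k A \<noteq> {} \<longrightarrow>
        (\<exists>N. \<forall>n\<ge>N. \<exists>x \<in> U \<inter> SFT k A. (shift ^^ n) x \<in> V))"

definition cyl :: "nat \<Rightarrow> (nat \<Rightarrow> nat \<Rightarrow> bool) \<Rightarrow> nat list \<Rightarrow> (nat \<Rightarrow> nat) set" where
  "cyl k A w = {x \<in> SFT k A. \<forall>i < length w. x i = w ! i}"

definition prefix_word :: "(nat \<Rightarrow> nat) \<Rightarrow> nat \<Rightarrow> nat list" where
  "prefix_word x n = map x [0..<n]"

definition words :: "nat \<Rightarrow> (nat \<Rightarrow> nat \<Rightarrow> bool) \<Rightarrow> nat \<Rightarrow> nat list set" where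
  "words k A n = {w. length w = n \<and> cyl k A w \<noteq> {}}"

text \<open>Sequences of potentials are maps nat => (nat => nat) => real; only indices n \<ge> 1
  are relevant.\<close>

definition almost_additive ::
  "nat \<Rightarrow> (nat \<Rightarrow> nat \<Rightarrow> bool) \<Rightarrow> (nat \<Rightarrow> (nat \<Rightarrow> nat) \<Rightarrow> real) \<Rightarrow> bool" where
  "almost_additive k A \<phi> \<longleftrightarrow>
     (\<exists>C. \<forall>x \<in> SFT k A. \<forall>n\<ge>1. \<forall>m\<ge>1.
        \<bar>\<phi> (n + m) x - \<phi> n x - \<phi> m ((shift ^^ n) x)\<bar> \<le> C)"

definition bounded_variation ::
  "nat \<Rightarrow> (nat \<Rightarrow> nat \<Rightarrow> bool) \<Rightarrow> (nat \<Rightarrow> (nat \<Rightarrow> nat) \<Rightarrow> real) \<Rightarrow> bool" where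
  "bounded_variation k A \<phi> \<longleftrightarrow>
     (\<exists>C'. \<forall>n\<ge>1. \<forall>x \<in> SFT k A. \<forall>y \<in> SFT k A.
        (\<forall>i<n. x i = y i) \<longrightarrow> \<bar>\<phi> n x - \<phi> n y\<bar> \<le> C')"

definition negative_pot ::
  "nat \<Rightarrow> (nat \<Rightarrow> nat \<Rightarrow> bool) \<Rightarrow> (nat \<Rightarrow> (nat \<Rightarrow> nat) \<Rightarrow> real) \<Rightarrow> bool" where
  "negative_pot k A \<phi> \<longleftrightarrow>
     (\<exists>c>0. \<forall>x \<in> SFT k A. \<forall>n\<ge>1. \<phi> n x \<le> - c * real n \<and> \<phi> (Suc n) x \<le> \<phi> n x)"

definition F_minus ::
  "nat \<Rightarrow> (nat \<Rightarrow> nat \<Rightarrow> bool) \<Rightarrow> (nat \<Rightarrow> (nat \<Rightarrow> nat) \<Rightarrow> real) \<Rightarrow> bool" where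
  "F_minus k A \<phi> \<longleftrightarrow>
     (\<forall>n\<ge>1. continuous_on (SFT k A) (\<phi> n)) \<and>
     almost_additive k A \<phi> \<and> bounded_variation k A \<phi> \<and> negative_pot k A \<phi>"

definition pressure ::
  "nat \<Rightarrow> (nat \<Rightarrow> nat \<Rightarrow> bool) \<Rightarrow> (nat \<Rightarrow> (nat \<Rightarrow> nat) \<Rightarrow> real) \<Rightarrow> real" where
  "pressure k A \<phi> =
     lim (\<lambda>n. ln (\<Sum>w \<in> words k A n. exp (SUP x \<in> cyl k A w. \<phi> n x)) / real n)"

definition dPsi ::
  "nat \<Rightarrow> (nat \<Rightarrow> nat \<Rightarrow> bool) \<Rightarrow> (nat \<Rightarrow> (nat \<Rightarrow> nat) \<Rightarrow> real) \<Rightarrow>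
   (nat \<Rightarrow> nat) \<Rightarrow> (nat \<Rightarrow> nat) \<Rightarrow> real" where
  "dPsi k A \<psi> x y =
     (if x = y then 0
      else (let n = (LEAST i. x i \<noteq> y i)
            in SUP z \<in> cyl k A (prefix_word x n). exp (if n = 0 then 0 else \<psi> n z)))"

definition ballPsi ::
  "nat \<Rightarrow> (nat \<Rightarrow> nat \<Rightarrow> bool) \<Rightarrow> (nat \<Rightarrow> (nat \<Rightarrow> nat) \<Rightarrow> real) \<Rightarrow>
   (nat \<Rightarrow> nat) \<Rightarrow> real \<Rightarrow> (nat \<Rightarrow> nat) set" where
  "ballPsi k A \<psi> x r = {y \<in> SFT k A. dPsi k A \<psi> x y < r}"

definition lower_local_dim ::
  "nat \<Rightarrow> (nat \<Rightarrow> nat \<Rightarrow> bool) \<Rightarrow> (nat \<Rightarrow> (nat \<Rightarrow> nat) \<Rightarrow> real) \<Rightarrow>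
   (nat \<Rightarrow> nat) measure \<Rightarrow> (nat \<Rightarrow> nat) \<Rightarrow> ereal" where
  "lower_local_dim k A \<psi> \<mu> x =
     Liminf (at_right 0) (\<lambda>r. ereal (ln (measure \<mu> (ballPsi k A \<psi> x r)) / ln r))"

definition upper_local_dim ::
  "nat \<Rightarrow> (nat \<Rightarrow> nat \<Rightarrow> bool) \<Rightarrow> (nat \<Rightarrow> (nat \<Rightarrow> nat) \<Rightarrow> real) \<Rightarrow>
   (nat \<Rightarrow> nat) measure \<Rightarrow> (nat \<Rightarrow> nat) \<Rightarrow> ereal" where
  "upper_local_dim k A \<psi> \<mu> x =
     Limsup (at_right 0) (\<lambda>r. ereal (ln (measure \<mu> (ballPsi k A \<psi> x r)) / ln r))"

text \<open>mu is the (invariant) Gibbs measure of the zero potential on Sigma_A, i.e.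
  mu([x|_n]) is comparable to exp(-n P(0)) uniformly; this is the measure of maximal
  entropy mu_max.\<close>
definition gibbs_zero :: "nat \<Rightarrow> (nat \<Rightarrow> nat \<Rightarrow> bool) \<Rightarrow> (nat \<Rightarrow> nat) measure \<Rightarrow> bool" where
  "gibbs_zero k A \<mu> \<longleftrightarrow>
     emeasure \<mu> (space \<mu>) = 1 \<and> sets \<mu> = sets borel \<and> measure \<mu> (SFT k A) = 1 \<and>
     (\<forall>B \<in> sets \<mu>. measure \<mu> (shift -` B \<inter> space \<mu>) = measure \<mu> B) \<and>
     (\<exists>C\<ge>1. \<forall>x \<in> SFT k A. \<forall>n.
        measure \<mu> (cyl k A (prefix_word x n)) \<le> C * exp (- real n * pressure k A (\<lambda>_ _. 0)) \<and>
        exp (- real n * pressure k A (\<lambda>_ _. 0)) \<le> C * measure \<mu> (cyl k A (prefix_word x n)))"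

end

theory Submission
  imports Defs
begin

(*
  Let w_n be the largest value of exp psi_n on the cylinder [x|n] (w_0 = 1).  Since d_Psi(x, y)
  only depends on the first index where x and y differ and w_n decreases, the ball B(x, r) is
  the cylinder [x|m(r)], where m(r) is the first n with w_n < r.  Bounded variation and
  almost additivity give ln r = psi_m(r)(x) + O(1), and the Gibbs property gives
  ln mu(B(x, r)) = - m(r) Q(0) + O(1); hence ln mu(B(x, r)) / ln r is within O(1 / |ln r|) of
  Q(0) / (- psi_n(x) / n) at n = m(r).  Conversely, each depth n is matched by the radius
  r = w_n, whose ball has depth n + O(1).  Thus the lim inf and lim sup as r -> 0 agree with
  those of the sequence Q(0) / (- psi_n(x) / n) as n -> infinity.
*)

lemma Liminf_le_Liminf_of_close:
  fixes f :: "'a \<Rightarrow> real" and g :: "'b \<Rightarrow> real"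
  assumes \<sigma>: "filterlim \<sigma> G F" and close: "((\<lambda>x. f x - g (\<sigma> x)) \<longlongrightarrow> 0) F"
  shows "Liminf G (\<lambda>y. ereal (g y)) \<le> Liminf F (\<lambda>x. ereal (f x))"
  unfolding le_Liminf_iff
proof (intro allI impI)
  fix y assume "y < Liminf G (\<lambda>y. ereal (g y))"
  then obtain a b where ya: "y < ereal a" and ab: "a < b" and b: "ereal b < Liminf G (\<lambda>y. ereal (g y))"
    by (metis ereal_dense2 less_ereal.simps(1))
  have "eventually (\<lambda>z. b < g z) G"
    using b le_Liminf_iff[of "Liminf G (\<lambda>y. ereal (g y))" G "\<lambda>y. ereal (g y)"] by auto
  then have "eventually (\<lambda>x. b < g (\<sigma> x)) F"
    using \<sigma> by (rule eventually_compose_filterlim)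
  moreover have "eventually (\<lambda>x. \<bar>f x - g (\<sigma> x)\<bar> < b - a) F"
    using close ab by (auto simp: tendsto_iff dist_real_def)
  ultimately show "eventually (\<lambda>x. y < ereal (f x)) F"
    by eventually_elim (use ya in \<open>auto intro: less_le_trans\<close>)
qed

lemma Limsup_le_Limsup_of_close:
  fixes f :: "'a \<Rightarrow> real" and g :: "'b \<Rightarrow> real"
  assumes "filterlim \<sigma> G F" and "((\<lambda>x. f x - g (\<sigma> x)) \<longlongrightarrow> 0) F"
  shows "Limsup F (\<lambda>x. ereal (f x)) \<le> Limsup G (\<lambda>y. ereal (g y))"
proof -
  have "((\<lambda>x. - f x - - g (\<sigma> x)) \<longlongrightarrow> 0) F"
    using tendsto_minus[OF assms(2)] by simp
  then have "Liminf G (\<lambda>y. ereal (- g y)) \<le> Liminf F (\<lambda>x. ereal (- f x))"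
    by (rule Liminf_le_Liminf_of_close[OF assms(1)])
  then show ?thesis
    using ereal_Liminf_uminus[of G "\<lambda>y. ereal (g y)"] ereal_Liminf_uminus[of F "\<lambda>x. ereal (f x)"]
    by simp
qed

lemma ereal_inverse_uminus_neg:
  assumes "L \<le> - ereal c" "0 < c"
  shows "ereal h * inverse (- L) = - ereal h / L"
  using assms by (cases L) (auto simp: divide_ereal_def)

lemma
  fixes a :: "'a \<Rightarrow> real"
  assumes F: "F \<noteq> bot" and h: "0 \<le> h" and c: "0 < c" and a: "eventually (\<lambda>n. a n \<le> - c) F"
  shows Liminf_ereal_div_neg: "Liminf F (\<lambda>n. ereal (h / - a n)) = - ereal h / Liminf F (\<lambda>n. ereal (a n))"
    and Limsup_ereal_div_neg: "Limsup F (\<lambda>n. ereal (h / - a n)) = - ereal h / Limsup F (\<lambda>n. ereal (a n))"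
proof -
  have eq: "eventually (\<lambda>n. ereal (h / - a n) = ereal h * inverse (- ereal (a n))) F"
    using a by eventually_elim (use c in \<open>simp add: divide_simps\<close>)
  have nonneg: "eventually (\<lambda>n. 0 \<le> - ereal (a n)) F"
    using a by eventually_elim (use c in simp)
  have "Limsup F (\<lambda>n. ereal (a n)) \<le> - ereal c"
    using a by (intro Limsup_bounded) (auto elim: eventually_mono)
  moreover have "Liminf F (\<lambda>n. ereal (a n)) \<le> Limsup F (\<lambda>n. ereal (a n))"
    using F by (rule Liminf_le_Limsup)
  ultimately have "Liminf F (\<lambda>n. ereal (a n)) \<le> - ereal c" by order
  show "Liminf F (\<lambda>n. ereal (h / - a n)) = - ereal h / Liminf F (\<lambda>n. ereal (a n))"
    unfolding Liminf_eq[OF eq] Liminf_ereal_mult_left[OF F h] Liminf_inverse_ereal[OF F nonneg]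
      ereal_Limsup_uminus
    by (rule ereal_inverse_uminus_neg) fact+
  show "Limsup F (\<lambda>n. ereal (h / - a n)) = - ereal h / Limsup F (\<lambda>n. ereal (a n))"
    unfolding Limsup_eq[OF eq] Limsup_ereal_mult_left[OF F h] Limsup_inverse_ereal[OF F nonneg]
      ereal_Liminf_uminus
    by (rule ereal_inverse_uminus_neg) fact+
qed

(* Applied with M = ln mu(B(x, r)), s = ln r and q = psi_n(x). *)
lemma abs_ratio_diff_le:
  fixes s q M h E K c :: real and n :: nat
  assumes s: "s < 0" and c: "0 < c" and n: "0 < n" and q: "q \<le> - c * n"
    and sq: "\<bar>s - q\<bar> \<le> K" and M: "\<bar>M + n * h\<bar> \<le> E" and h: "0 \<le> h"
  shows "\<bar>M / s - h / - (q / n)\<bar> \<le> (E + h * K / c) / - s"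
proof -
  have cnq: "c * n \<le> - q"
    using q by simp
  have q0: "0 < - q"
    using c n cnq by (metis of_nat_0_less_iff mult_pos_pos order_less_le_trans)
  have split: "M / s - h / - (q / n) = (M + n * h) / s + n * h * (s - q) / (s * q)"
    using s q0 n by (simp add: field_simps)
  have "\<bar>(M + n * h) / s\<bar> = \<bar>M + n * h\<bar> / - s"
    using s by (simp add: abs_div)
  also have "\<dots> \<le> E / - s"
    using M s by (intro divide_right_mono) auto
  finally have "\<bar>(M + n * h) / s\<bar> \<le> E / - s" .
  moreover have "\<bar>n * h * (s - q) / (s * q)\<bar> \<le> h * K / c / - s"
  proof -
    have "n * h * (s - q) / (s * q) = h * (n / - q) / - s * (s - q)"
      using s q0 by (simp add: field_simps)
    then have "\<bar>n * h * (s - q) / (s * q)\<bar> = h * (n / - q) / - s * \<bar>s - q\<bar>"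
      using s q0 h by (simp add: abs_mult)
    also have "\<dots> \<le> h * (1 / c) / - s * K"
    proof (rule mult_mono)
      have "n / - q \<le> 1 / c"
        using cnq c q0 by (simp add: field_simps)
      then show "h * (n / - q) / - s \<le> h * (1 / c) / - s"
        using h s by (intro divide_right_mono mult_left_mono) auto
      show "0 \<le> h * (1 / c) / - s"
        using h c s by (intro divide_nonneg_pos) auto
    qed (use sq in auto)
    finally show ?thesis by simp
  qed
  ultimately have "\<bar>M / s - h / - (q / n)\<bar> \<le> E / - s + h * K / c / - s"
    unfolding split by (rule order_trans[OF abs_triangle_ineq add_mono])
  then show ?thesis
    by (simp add: add_divide_distrib)
qed

lemma tendsto_const_divide_ln_at_right_0: "((\<lambda>r. a / ln r) \<longlongrightarrow> (0::real)) (at_right 0)"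
  using tendsto_const filterlim_mono[OF ln_at_0 at_bot_le_at_infinity order_refl]
  by (rule tendsto_divide_0)

lemma funpow_shift_apply: "(shift ^^ n) x i = x (n + i)"
  by (induction n arbitrary: i) (auto simp: shift_def)

lemma funpow_shift_SFT: "x \<in> SFT k A \<Longrightarrow> (shift ^^ n) x \<in> SFT k A"
  by (auto simp: SFT_def funpow_shift_apply)

lemma mem_cyl_prefix_word: "y \<in> cyl k A (prefix_word x n) \<longleftrightarrow> y \<in> SFT k A \<and> (\<forall>i<n. y i = x i)"
  by (auto simp: cyl_def prefix_word_def)

lemma SFT_first_potential_bounded:
  assumes "bounded_variation k A \<psi>"
  shows "\<exists>B. \<forall>z\<in>SFT k A. \<bar>\<psi> 1 z\<bar> \<le> B"
proof -
  obtain C' where BV: "\<And>z y. z \<in> SFT k A \<Longrightarrow> y \<in> SFT k A \<Longrightarrow> z 0 = y 0 \<Longrightarrow> \<bar>\<psi> 1 z - \<psi> 1 y\<bar> \<le> C'"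
    using assms unfolding bounded_variation_def by (metis le_numeral_extra(4) less_one)
  define rep where "rep s = (SOME z. z \<in> SFT k A \<and> z 0 = s)" for s
  have "\<bar>\<psi> 1 z\<bar> \<le> (\<Sum>s<k. \<bar>\<psi> 1 (rep s)\<bar>) + C'" if z: "z \<in> SFT k A" for z
  proof -
    have rep: "rep (z 0) \<in> SFT k A \<and> rep (z 0) 0 = z 0"
      unfolding rep_def by (rule someI[of _ z]) (simp add: z)
    have "\<bar>\<psi> 1 (rep (z 0))\<bar> \<le> (\<Sum>s<k. \<bar>\<psi> 1 (rep s)\<bar>)"
      using z by (intro member_le_sum) (auto simp: SFT_def)
    with BV[OF z, of "rep (z 0)"] rep show ?thesis by linarith
  qed
  then show ?thesis by blast
qed

lemma agree_below_iff_le_Least: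
  fixes x y :: "nat \<Rightarrow> 'a"
  assumes "x \<noteq> y"
  shows "(\<forall>i<d. y i = x i) \<longleftrightarrow> d \<le> (LEAST i. x i \<noteq> y i)"
proof
  obtain i where "x i \<noteq> y i"
    using assms by blast
  then have "x (LEAST i. x i \<noteq> y i) \<noteq> y (LEAST i. x i \<noteq> y i)"
    by (rule LeastI[of "\<lambda>i. x i \<noteq> y i"])
  then show "(\<forall>i<d. y i = x i) \<Longrightarrow> d \<le> (LEAST i. x i \<noteq> y i)"
    using not_less by metis
next
  show "d \<le> (LEAST i. x i \<noteq> y i) \<Longrightarrow> \<forall>i<d. y i = x i"
    using not_less_Least[of _ "\<lambda>i. x i \<noteq> y i"] by (metis order_less_le_trans)
qed

locale dPsi_ball =
  fixes k :: nat and A :: "nat \<Rightarrow> nat \<Rightarrow> bool" and \<psi> :: "nat \<Rightarrow> (nat \<Rightarrow> nat) \<Rightarrow> real"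
    and x :: "nat \<Rightarrow> nat" and B C C' c :: real
  assumes x_in_SFT: "x \<in> SFT k A"
    and almost_additive:
      "\<And>z n m. z \<in> SFT k A \<Longrightarrow> 1 \<le> n \<Longrightarrow> 1 \<le> m \<Longrightarrow>
        \<bar>\<psi> (n + m) z - \<psi> n z - \<psi> m ((shift ^^ n) z)\<bar> \<le> C"
    and bounded_variation:
      "\<And>n z. 1 \<le> n \<Longrightarrow> z \<in> SFT k A \<Longrightarrow> (\<forall>i<n. z i = x i) \<Longrightarrow> \<psi> n z \<le> \<psi> n x + C'"
    and c_pos: "0 < c"
    and negative: "\<And>z n. z \<in> SFT k A \<Longrightarrow> 1 \<le> n \<Longrightarrow> \<psi> n z \<le> - c * n"
    and decreasing: "\<And>z n. z \<in> SFT k A \<Longrightarrow> 1 \<le> n \<Longrightarrow> \<psi> (Suc n) z \<le> \<psi> n z"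
    and first_lower: "\<And>z. z \<in> SFT k A \<Longrightarrow> - B \<le> \<psi> 1 z"
begin

lemma C_nonneg: "0 \<le> C"
  using almost_additive[OF x_in_SFT, of 1 1] by linarith

lemma C'_nonneg: "0 \<le> C'"
  using bounded_variation[OF _ x_in_SFT, of 1] by simp

definition psi0 :: "nat \<Rightarrow> (nat \<Rightarrow> nat) \<Rightarrow> real" where
  "psi0 n z = (if n = 0 then 0 else \<psi> n z)"

lemma psi0_le: "z \<in> SFT k A \<Longrightarrow> psi0 n z \<le> - c * n"
  using negative[of z n] by (simp add: psi0_def)

lemma psi0_Suc_le: "z \<in> SFT k A \<Longrightarrow> psi0 (Suc n) z \<le> psi0 n z"
  using decreasing[of z n] negative[of z 1] c_pos by (simp add: psi0_def)

lemma psi0_Suc_ge: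
  assumes z: "z \<in> SFT k A"
  shows "psi0 n z - (B + C) \<le> psi0 (Suc n) z"
proof (cases "n = 0")
  case True
  then show ?thesis using first_lower[OF z] C_nonneg by (simp add: psi0_def)
next
  case False
  then have "\<bar>\<psi> (n + 1) z - \<psi> n z - \<psi> 1 ((shift ^^ n) z)\<bar> \<le> C"
    using almost_additive[OF z, of n 1] by simp
  with first_lower[OF funpow_shift_SFT[OF z, of n]] False show ?thesis
    by (simp add: psi0_def abs_le_iff)
qed

lemma psi0_gap:
  assumes z: "z \<in> SFT k A" and "n \<le> m"
  shows "psi0 m z \<le> psi0 n z - c * (real m - real n) + C"
proof (cases "n = 0 \<or> m = n")
  case True
  then show ?thesis using psi0_le[OF z, of m] C_nonneg by (auto simp: psi0_def)
next
  case False
  obtain j where "m = n + j"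
    using \<open>n \<le> m\<close> le_Suc_ex by blast
  with False have j: "m = n + j" "1 \<le> j" "1 \<le> n"
    by auto
  then have "\<psi> m z \<le> \<psi> n z + \<psi> j ((shift ^^ n) z) + C"
    using almost_additive[OF z, of n j] by (simp add: abs_le_iff)
  with negative[OF funpow_shift_SFT[OF z, of n] j(2)] j show ?thesis
    by (simp add: psi0_def)
qed

definition cyl_weight :: "nat \<Rightarrow> real" where
  "cyl_weight n = (SUP z \<in> cyl k A (prefix_word x n). exp (psi0 n z))"

lemma dPsi_eq_cyl_weight: "y \<noteq> x \<Longrightarrow> dPsi k A \<psi> x y = cyl_weight (LEAST i. x i \<noteq> y i)"
  by (simp add: dPsi_def cyl_weight_def psi0_def Let_def)

lemma x_in_cyl: "x \<in> cyl k A (prefix_word x n)"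
  by (simp add: mem_cyl_prefix_word x_in_SFT)

lemma psi0_cyl_le: "z \<in> cyl k A (prefix_word x n) \<Longrightarrow> psi0 n z \<le> psi0 n x + C'"
  using bounded_variation[of n z] C'_nonneg by (auto simp: psi0_def mem_cyl_prefix_word)

lemma exp_psi0_le_cyl_weight:
  assumes "z \<in> cyl k A (prefix_word x n)"
  shows "exp (psi0 n z) \<le> cyl_weight n"
  unfolding cyl_weight_def
  by (rule cSUP_upper[OF assms bdd_aboveI2]) (use psi0_cyl_le in auto)

lemma cyl_weight_lower: "exp (psi0 n x) \<le> cyl_weight n"
  using x_in_cyl by (rule exp_psi0_le_cyl_weight)

lemma cyl_weight_upper: "cyl_weight n \<le> exp (psi0 n x + C')"
  unfolding cyl_weight_def
  by (rule cSUP_least) (use x_in_cyl psi0_cyl_le in auto)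

lemma cyl_weight_pos: "0 < cyl_weight n"
  using cyl_weight_lower[of n] exp_gt_zero by (rule less_le_trans[rotated])

lemma cyl_weight_0: "cyl_weight 0 = 1"
proof -
  have "cyl k A (prefix_word x 0) \<noteq> {}"
    using x_in_cyl by blast
  then show ?thesis
    by (simp add: cyl_weight_def psi0_def)
qed

lemma cyl_weight_Suc_le: "cyl_weight (Suc n) \<le> cyl_weight n"
  unfolding cyl_weight_def[of "Suc n"]
proof (rule cSUP_least)
  fix z assume "z \<in> cyl k A (prefix_word x (Suc n))"
  then have z: "z \<in> SFT k A" "z \<in> cyl k A (prefix_word x n)"
    by (auto simp: mem_cyl_prefix_word)
  have "exp (psi0 (Suc n) z) \<le> exp (psi0 n z)"
    using psi0_Suc_le[OF z(1)] by simp
  also have "\<dots> \<le> cyl_weight n"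
    using z(2) by (rule exp_psi0_le_cyl_weight)
  finally show "exp (psi0 (Suc n) z) \<le> cyl_weight n" .
qed (use x_in_cyl in auto)

lemma cyl_weight_antimono: "m \<le> n \<Longrightarrow> cyl_weight n \<le> cyl_weight m"
  using lift_Suc_antimono_le[of cyl_weight, OF cyl_weight_Suc_le] .

lemma cyl_weight_LIMSEQ_0: "cyl_weight \<longlonglongrightarrow> 0"
proof (rule Lim_null_comparison)
  have "cyl_weight n \<le> exp (psi0 n x + C')" for n
    by (rule cyl_weight_upper)
  also have "exp (psi0 n x + C') \<le> exp C' * exp (- c) ^ n" for n
    using psi0_le[OF x_in_SFT, of n]
    by (simp add: exp_of_nat_mult[symmetric] exp_add[symmetric] algebra_simps)
  finally show "eventually (\<lambda>n. norm (cyl_weight n) \<le> exp C' * exp (- c) ^ n) sequentially"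
    using cyl_weight_pos by (simp add: less_imp_le)
  show "(\<lambda>n. exp C' * exp (- c) ^ n) \<longlonglongrightarrow> 0"
    using c_pos by (intro tendsto_mult_right_zero LIMSEQ_power_zero) simp
qed

lemma cyl_weight_tendsto_0: "filterlim cyl_weight (at_right 0) sequentially"
  using cyl_weight_LIMSEQ_0 by (rule tendsto_imp_filterlim_at_right) (simp add: cyl_weight_pos)

definition ball_depth :: "real \<Rightarrow> nat" where
  "ball_depth r = (LEAST n. cyl_weight n < r)"

lemma cyl_weight_ball_depth_less:
  assumes "0 < r" shows "cyl_weight (ball_depth r) < r"
proof -
  have "eventually (\<lambda>n. cyl_weight n < r) sequentially"
    using cyl_weight_LIMSEQ_0 assms by (rule order_tendstoD)
  then show ?thesis
    unfolding ball_depth_def by (metis LeastI_ex eventually_sequentially order_refl)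
qed

lemma less_ball_depth_iff:
  assumes "0 < r" shows "n < ball_depth r \<longleftrightarrow> r \<le> cyl_weight n"
proof
  assume "n < ball_depth r"
  then show "r \<le> cyl_weight n"
    unfolding ball_depth_def by (metis not_less_Least not_less)
next
  assume "r \<le> cyl_weight n"
  then show "n < ball_depth r"
    using cyl_weight_ball_depth_less[OF assms] cyl_weight_antimono[of "ball_depth r" n] by fastforce
qed

lemma ballPsi_eq_cyl:
  assumes r: "0 < r"
  shows "ballPsi k A \<psi> x r = cyl k A (prefix_word x (ball_depth r))"
proof -
  have "dPsi k A \<psi> x y < r \<longleftrightarrow> (\<forall>i<ball_depth r. y i = x i)" for y
  proof (cases "y = x")
    case True
    then show ?thesis using r by (simp add: dPsi_def)
  next
    case False
    then show ?thesis
      using less_ball_depth_iff[OF r, of "LEAST i. x i \<noteq> y i"]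
      by (auto simp: dPsi_eq_cyl_weight agree_below_iff_le_Least not_less[symmetric])
  qed
  then show ?thesis
    by (auto simp: ballPsi_def mem_cyl_prefix_word)
qed

lemma ball_depth_tendsto: "filterlim ball_depth at_top (at_right 0)"
  unfolding filterlim_at_top
proof
  fix N
  have "eventually (\<lambda>r. 0 < r \<and> r < cyl_weight N) (at_right 0)"
    using cyl_weight_pos[of N] by (auto simp: eventually_at_right_field)
  then show "eventually (\<lambda>r. N \<le> ball_depth r) (at_right 0)"
    by eventually_elim (simp add: less_ball_depth_iff less_imp_le_nat)
qed

lemma ln_radius_bounds:
  assumes r: "0 < r" "r \<le> 1"
  shows "psi0 (ball_depth r) x < ln r" and "ln r \<le> psi0 (ball_depth r) x + (B + C + C')"
proof -
  define m where "m = ball_depth r"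
  have "0 < m"
    using r less_ball_depth_iff[OF r(1), of 0] by (simp add: m_def cyl_weight_0)
  have "exp (psi0 m x) < r"
    using cyl_weight_lower[of m] cyl_weight_ball_depth_less[OF r(1)] by (simp add: m_def)
  then show "psi0 (ball_depth r) x < ln r"
    using ln_less_cancel_iff[of "exp (psi0 m x)" r] r by (simp add: m_def)
  have "r \<le> exp (psi0 (m - 1) x + C')"
    using less_ball_depth_iff[OF r(1), of "m - 1"] cyl_weight_upper[of "m - 1"] \<open>0 < m\<close>
    by (simp add: m_def)
  then have "ln r \<le> psi0 (m - 1) x + C'"
    using ln_le_cancel_iff[of r "exp (psi0 (m - 1) x + C')"] r by simp
  moreover have "psi0 (m - 1) x - (B + C) \<le> psi0 m x"
    using psi0_Suc_ge[OF x_in_SFT, of "m - 1"] \<open>0 < m\<close> by simp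
  ultimately show "ln r \<le> psi0 (ball_depth r) x + (B + C + C')"
    by (simp add: m_def)
qed

lemma ball_depth_cyl_weight_le: "real (ball_depth (cyl_weight n)) - n \<le> (B + 2 * C + C') / c"
proof -
  define r m where "r = cyl_weight n" and "m = ball_depth r"
  have r: "0 < r" "r \<le> 1"
    using cyl_weight_pos cyl_weight_antimono[of 0 n] by (auto simp: r_def cyl_weight_0)
  have "n < m"
    using less_ball_depth_iff[OF r(1)] by (simp add: m_def r_def)
  have "psi0 n x \<le> ln r"
    using cyl_weight_lower[of n] r by (simp add: r_def ln_ge_iff)
  also have "ln r \<le> psi0 m x + (B + C + C')"
    using ln_radius_bounds(2)[OF r] by (simp add: m_def)
  also have "psi0 m x \<le> psi0 n x - c * (real m - real n) + C"
    using psi0_gap[OF x_in_SFT] \<open>n < m\<close> by simp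
  finally have "c * (real m - real n) \<le> B + 2 * C + C'"
    by simp
  then show ?thesis
    using c_pos by (simp add: m_def r_def field_simps)
qed

end

locale dPsi_ball_gibbs = dPsi_ball +
  fixes \<mu> :: "(nat \<Rightarrow> nat) measure" and h C0 :: real
  assumes prob: "emeasure \<mu> (space \<mu>) = 1"
    and gibbs_upper: "\<And>n. measure \<mu> (cyl k A (prefix_word x n)) \<le> C0 * exp (- real n * h)"
    and gibbs_lower: "\<And>n. exp (- real n * h) \<le> C0 * measure \<mu> (cyl k A (prefix_word x n))"
begin

lemma C0_mult_measure_cyl_pos: "0 < C0 * measure \<mu> (cyl k A (prefix_word x n))"
  using exp_gt_zero gibbs_lower by (rule less_le_trans)

lemma C0_pos: "0 < C0"
  using C0_mult_measure_cyl_pos[of 0] measure_nonneg[of \<mu>] by (auto simp: zero_less_mult_iff)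

lemma measure_cyl_pos: "0 < measure \<mu> (cyl k A (prefix_word x n))"
  using C0_mult_measure_cyl_pos[of n] C0_pos by (simp add: zero_less_mult_iff)

lemma h_nonneg: "0 \<le> h"
proof (rule ccontr)
  assume "\<not> 0 \<le> h"
  obtain n :: nat where n: "C0 / - h < n"
    using reals_Archimedean2 by blast
  have "measure \<mu> (cyl k A (prefix_word x n)) \<le> 1"
    unfolding measure_def by (rule enn2real_leI) (use emeasure_space[of \<mu>] prob in auto)
  then have "exp (- real n * h) \<le> C0"
    using gibbs_lower[of n] C0_pos mult_left_le[of _ C0] by (meson order_trans less_imp_le)
  moreover have "C0 < 1 + - real n * h"
    using n \<open>\<not> 0 \<le> h\<close> by (simp add: field_simps)
  ultimately show False
    using exp_ge_add_one_self[of "- real n * h"] by linarith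
qed

lemma ln_measure_cyl: "\<bar>ln (measure \<mu> (cyl k A (prefix_word x n))) + n * h\<bar> \<le> ln C0"
proof -
  define M where "M = measure \<mu> (cyl k A (prefix_word x n))"
  have "0 < M"
    using measure_cyl_pos by (simp add: M_def)
  have "ln M \<le> ln C0 - n * h"
    using gibbs_upper[of n] \<open>0 < M\<close> C0_pos ln_le_cancel_iff[of M "C0 * exp (- real n * h)"]
    by (simp add: M_def ln_mult)
  moreover have "- n * h \<le> ln C0 + ln M"
    using gibbs_lower[of n] \<open>0 < M\<close> C0_pos ln_le_cancel_iff[of "exp (- real n * h)" "C0 * M"]
    by (simp add: M_def ln_mult)
  ultimately show ?thesis
    by (simp add: M_def abs_le_iff)
qed

lemma ln_measure_ball: "0 < r \<Longrightarrow> \<bar>ln (measure \<mu> (ballPsi k A \<psi> x r)) + ball_depth r * h\<bar> \<le> ln C0"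
  by (simp add: ballPsi_eq_cyl ln_measure_cyl)

definition ball_dim :: "real \<Rightarrow> real" where
  "ball_dim r = ln (measure \<mu> (ballPsi k A \<psi> x r)) / ln r"

definition cyl_dim :: "nat \<Rightarrow> real" where
  "cyl_dim n = h / - (\<psi> n x / real n)"

lemma cyl_dim_psi0: "cyl_dim n = h / - (psi0 n x / real n)"
  by (simp add: cyl_dim_def psi0_def)

lemma ball_dim_close_cyl_dim_depth:
  "((\<lambda>r. ball_dim r - cyl_dim (ball_depth r)) \<longlongrightarrow> 0) (at_right 0)"
proof (rule Lim_null_comparison)
  define E where "E = ln C0 + h * (B + C + C') / c"
  have "eventually (\<lambda>r::real. 0 < r \<and> r < 1) (at_right 0)"
    unfolding eventually_at_right_field by (intro exI[of _ 1]) auto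
  then show "eventually (\<lambda>r. norm (ball_dim r - cyl_dim (ball_depth r)) \<le> - E / ln r) (at_right 0)"
  proof eventually_elim
    case (elim r)
    then have "0 < ball_depth r"
      using less_ball_depth_iff[of r 0] by (simp add: cyl_weight_0)
    have "\<bar>ln r - psi0 (ball_depth r) x\<bar> \<le> B + C + C'"
      using ln_radius_bounds[of r] elim by (simp add: abs_le_iff)
    then have "\<bar>ball_dim r - cyl_dim (ball_depth r)\<bar> \<le> E / - ln r"
      unfolding ball_dim_def cyl_dim_psi0 E_def
      using elim \<open>0 < ball_depth r\<close>
      by (intro abs_ratio_diff_le c_pos h_nonneg psi0_le[OF x_in_SFT] ln_measure_ball) auto
    then show ?case
      by simp
  qed
  show "((\<lambda>r. - E / ln r) \<longlongrightarrow> 0) (at_right 0)"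
    by (rule tendsto_const_divide_ln_at_right_0)
qed

lemma cyl_dim_close_ball_dim_weight:
  "((\<lambda>n. cyl_dim n - ball_dim (cyl_weight n)) \<longlongrightarrow> 0) sequentially"
proof (rule Lim_null_comparison)
  define E where "E = ln C0 + h * ((B + 2 * C + C') / c) + h * C' / c"
  have "eventually (\<lambda>n. cyl_weight n < 1) sequentially"
    using cyl_weight_LIMSEQ_0 by (rule order_tendstoD) simp
  then show "eventually (\<lambda>n. norm (cyl_dim n - ball_dim (cyl_weight n)) \<le> - E / ln (cyl_weight n))
      sequentially"
  proof eventually_elim
    case (elim n)
    define r m where "r = cyl_weight n" and "m = ball_depth r"
    have r: "0 < r" "r < 1"
      using elim cyl_weight_pos by (auto simp: r_def)
    have "n < m"
      using less_ball_depth_iff[OF r(1)] by (simp add: m_def r_def)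
    have "0 < n"
      using elim by (auto simp: cyl_weight_0 intro: gr0I)
    have "\<bar>ln r - psi0 n x\<bar> \<le> C'"
      using cyl_weight_lower[of n] cyl_weight_upper[of n] r
        ln_le_cancel_iff[of r "exp (psi0 n x + C')"]
      by (simp add: r_def abs_le_iff ln_ge_iff)
    moreover have "\<bar>ln (measure \<mu> (ballPsi k A \<psi> x r)) + n * h\<bar> \<le> ln C0 + h * ((B + 2 * C + C') / c)"
    proof -
      have "real m * h - real n * h \<le> h * ((B + 2 * C + C') / c)"
        using mult_left_mono[OF ball_depth_cyl_weight_le[of n] h_nonneg]
        by (simp add: m_def r_def algebra_simps)
      moreover have "real n * h \<le> real m * h"
        using \<open>n < m\<close> h_nonneg by (simp add: mult_right_mono)
      moreover have "\<bar>ln (measure \<mu> (ballPsi k A \<psi> x r)) + real m * h\<bar> \<le> ln C0"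
        using ln_measure_ball[OF r(1)] by (simp add: m_def)
      ultimately show ?thesis
        unfolding abs_le_iff by linarith
    qed
    ultimately have "\<bar>ball_dim r - cyl_dim n\<bar> \<le> E / - ln r"
      unfolding ball_dim_def cyl_dim_psi0 E_def
      using r \<open>0 < n\<close>
      by (intro abs_ratio_diff_le c_pos h_nonneg psi0_le[OF x_in_SFT]) auto
    then show ?case
      by (simp add: r_def abs_minus_commute)
  qed
  show "((\<lambda>n. - E / ln (cyl_weight n)) \<longlongrightarrow> 0) sequentially"
    using tendsto_const_divide_ln_at_right_0 cyl_weight_tendsto_0 by (rule filterlim_compose)
qed

lemma lower_local_dim_eq_Liminf_cyl_dim:
  "lower_local_dim k A \<psi> \<mu> x = Liminf sequentially (\<lambda>n. ereal (cyl_dim n))"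
proof -
  have "lower_local_dim k A \<psi> \<mu> x = Liminf (at_right 0) (\<lambda>r. ereal (ball_dim r))"
    by (simp add: lower_local_dim_def ball_dim_def)
  also have "\<dots> = Liminf sequentially (\<lambda>n. ereal (cyl_dim n))"
    using Liminf_le_Liminf_of_close[OF cyl_weight_tendsto_0 cyl_dim_close_ball_dim_weight]
      Liminf_le_Liminf_of_close[OF ball_depth_tendsto ball_dim_close_cyl_dim_depth]
    by (rule antisym)
  finally show ?thesis .
qed

lemma upper_local_dim_eq_Limsup_cyl_dim:
  "upper_local_dim k A \<psi> \<mu> x = Limsup sequentially (\<lambda>n. ereal (cyl_dim n))"
proof -
  have "upper_local_dim k A \<psi> \<mu> x = Limsup (at_right 0) (\<lambda>r. ereal (ball_dim r))"
    by (simp add: upper_local_dim_def ball_dim_def)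
  also have "\<dots> = Limsup sequentially (\<lambda>n. ereal (cyl_dim n))"
    using Limsup_le_Limsup_of_close[OF ball_depth_tendsto ball_dim_close_cyl_dim_depth]
      Limsup_le_Limsup_of_close[OF cyl_weight_tendsto_0 cyl_dim_close_ball_dim_weight]
    by (rule antisym)
  finally show ?thesis .
qed

end

lemma F_minus_imp_dPsi_ball:
  assumes "F_minus k A \<psi>" and x: "x \<in> SFT k A"
  shows "\<exists>B C C' c. dPsi_ball k A \<psi> x B C C' c"
proof -
  obtain B where B: "\<And>z. z \<in> SFT k A \<Longrightarrow> \<bar>\<psi> 1 z\<bar> \<le> B"
    using assms(1) SFT_first_potential_bounded unfolding F_minus_def by blast
  obtain C where C: "\<And>z n m. z \<in> SFT k A \<Longrightarrow> 1 \<le> n \<Longrightarrow> 1 \<le> m \<Longrightarrow>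
      \<bar>\<psi> (n + m) z - \<psi> n z - \<psi> m ((shift ^^ n) z)\<bar> \<le> C"
    using assms(1) unfolding F_minus_def almost_additive_def by blast
  obtain C' where C': "\<And>n z y. 1 \<le> n \<Longrightarrow> z \<in> SFT k A \<Longrightarrow> y \<in> SFT k A \<Longrightarrow>
      (\<forall>i<n. z i = y i) \<Longrightarrow> \<bar>\<psi> n z - \<psi> n y\<bar> \<le> C'"
    using assms(1) unfolding F_minus_def bounded_variation_def by blast
  obtain c where c: "0 < c" "\<And>z n. z \<in> SFT k A \<Longrightarrow> 1 \<le> n \<Longrightarrow>
      \<psi> n z \<le> - c * real n \<and> \<psi> (Suc n) z \<le> \<psi> n z"
    using assms(1) unfolding F_minus_def negative_pot_def by blast
  have "dPsi_ball k A \<psi> x B C C' c"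
  proof
    show "\<psi> n z \<le> \<psi> n x + C'" if "1 \<le> n" "z \<in> SFT k A" "\<forall>i<n. z i = x i" for n z
      using C'[OF that(1,2) x that(3)] by (simp add: abs_le_iff)
    show "- B \<le> \<psi> 1 z" if "z \<in> SFT k A" for z
      using B[OF that] by (simp add: abs_le_iff)
  qed (use x C c in auto)
  then show ?thesis
    by blast
qed

theorem lemma2p5:
  fixes k :: nat and A :: "nat \<Rightarrow> nat \<Rightarrow> bool"
    and \<psi> :: "nat \<Rightarrow> (nat \<Rightarrow> nat) \<Rightarrow> real" and \<mu> :: "(nat \<Rightarrow> nat) measure"
  assumes "top_mixing k A"
    and "F_minus k A \<psi>"
    and "gibbs_zero k A \<mu>"
    and "x \<in> SFT k A"
  defines "Q \<equiv> (\<lambda>s::real. pressure k A (\<lambda>n z. s * \<psi> n z))"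
  shows "(lower_local_dim k A \<psi> \<mu> x =
           - ereal (Q 0) / Liminf sequentially (\<lambda>n. ereal (\<psi> n x / real n))) \<and>
         (upper_local_dim k A \<psi> \<mu> x =
           - ereal (Q 0) / Limsup sequentially (\<lambda>n. ereal (\<psi> n x / real n)))"
proof -
  (* Mixing only serves to produce mu_max, whose Gibbs property is already part of gibbs_zero. *)
  obtain B C C' c where "dPsi_ball k A \<psi> x B C C' c"
    using F_minus_imp_dPsi_ball assms(2,4) by blast
  moreover obtain C0 where "\<forall>n. measure \<mu> (cyl k A (prefix_word x n)) \<le> C0 * exp (- real n * Q 0) \<and>
      exp (- real n * Q 0) \<le> C0 * measure \<mu> (cyl k A (prefix_word x n))"
    using assms(3,4) unfolding gibbs_zero_def Q_def by auto
  moreover have "emeasure \<mu> (space \<mu>) = 1"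
    using assms(3) unfolding gibbs_zero_def by blast
  ultimately interpret dPsi_ball_gibbs k A \<psi> x B C C' c \<mu> "Q 0" C0
    by (simp add: dPsi_ball_gibbs_def dPsi_ball_gibbs_axioms_def)
  have "eventually (\<lambda>n. \<psi> n x / real n \<le> - c) sequentially"
    using eventually_ge_at_top[of 1]
    by eventually_elim (use negative[OF x_in_SFT] in \<open>simp add: field_simps\<close>)
  then show ?thesis
    unfolding lower_local_dim_eq_Liminf_cyl_dim upper_local_dim_eq_Limsup_cyl_dim cyl_dim_def
    by (intro conjI Liminf_ereal_div_neg Limsup_ereal_div_neg sequentially_bot h_nonneg)
      (use c_pos in simp_all)
qed

end
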